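(* For every $n\ge1$, the $n\times n$ grid communication graph (with a direction assignment giving adjacent circles opposite directions) has exactly $n$ rings, each of length $2n\pi$, and each ring hits each of the four walls exactly once.
   Context: Grid. The $n\times m$ grid communication graph consists of $nm$ pairwise disjoint unit circles, circle $(i,j)$ in row $i$ (rows horizontal, row 1 on top) and column $j$ (columns vertical, column 1 on the left), centres on a square lattice, circle $(i,j)$ adjacent exactly to the existing circles $(i\pm1,j)$, $(i,j\pm1)$. For adjacent circles $C_i,C_j$, the link position $\phi_{ij}$ is the point of $C_i$ closest to $C_j$. A direction assignment gives each circle $C$ a direction $g(C)\in\{1,-1\}$ (counterclockwise/clockwise), with $g(C_i)=-g(C_j)$ for adjacent circles. Rings. Trace a point moving along a circle $C_i$ in direction $g(C_i)$; whenever it reaches a link position $\phi_{ij}$ of its current circle, it passes to $C_j$ at $\phi_{ji}$ and continues along $C_j$ in direction $g(C_j)$. This motion is periodic and the closed curve it traces is a ring. The circles decompose into rings overlapping only at link positions. The length of a ring is the total length of the circle arcs forming it. Walls. A ring hits the top wall each time it passes through the topmost point of a circle of row 1; similarly bottom wall (bottommost points of circles of the last row), left wall (leftmost points of circles of column 1) and right wall (rightmost points of circles of the last column). *)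

theory Defs
  imports Complex_Main
begin

text \<open>Circle (i,j) with 1 \<le> i \<le> n (row, row 1 on top) and 1 \<le> j \<le> m (column, column 1 left).
  On each unit circle the four quarter points are numbered by angle k*pi/2:
  0 = rightmost (east), 1 = topmost (north), 2 = leftmost (west), 3 = bottommost (south).
  Point p of circle c is the link position towards the neighbour in direction p (if it exists);
  the corresponding link position on the neighbour is its point (p+2) mod 4.
  Arc (c,k) is the quarter arc of circle c from point k to point (k+1) mod 4
  (counterclockwise), of length pi/2.\<close>

type_synonym circ = "nat \<times> nat"
type_synonym arc = "circ \<times> nat"

definition grid :: "nat \<Rightarrow> nat \<Rightarrow> circ set" where
  "grid n m = {1..n} \<times> {1..m}"

definition nbr :: "nat \<Rightarrow> nat \<Rightarrow> circ \<Rightarrow> nat \<Rightarrow> circ option" where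
  "nbr n m c p =
     (let i = fst c; j = snd c;
          c' = (if p = 0 then (i, j + 1) else if p = 1 then (i - 1, j)
                else if p = 2 then (i, j - 1) else (i + 1, j))
      in if c \<in> grid n m \<and> p < 4 \<and> c' \<in> grid n m \<and> c' \<noteq> c then Some c' else None)"

definition adjacent :: "nat \<Rightarrow> nat \<Rightarrow> circ \<Rightarrow> circ \<Rightarrow> bool" where
  "adjacent n m c c' \<longleftrightarrow> c \<in> grid n m \<and> c' \<in> grid n m \<and>
     (\<bar>int (fst c) - int (fst c')\<bar> + \<bar>int (snd c) - int (snd c')\<bar> = 1)"

text \<open>Direction assignment: 1 = counterclockwise, -1 = clockwise; adjacent circles opposite.\<close>
definition direction_assignment :: "nat \<Rightarrow> nat \<Rightarrow> (circ \<Rightarrow> int) \<Rightarrow> bool" where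
  "direction_assignment n m g \<longleftrightarrow>
     (\<forall>c \<in> grid n m. g c = 1 \<or> g c = -1) \<and>
     (\<forall>c c'. adjacent n m c c' \<longrightarrow> g c = - g c')"

definition arcs :: "nat \<Rightarrow> nat \<Rightarrow> arc set" where
  "arcs n m = grid n m \<times> {0..<4}"

text \<open>Quarter point at which the moving point leaves arc a (traversed in direction g).\<close>
definition end_pt :: "(circ \<Rightarrow> int) \<Rightarrow> arc \<Rightarrow> nat" where
  "end_pt g a = (if g (fst a) = 1 then (snd a + 1) mod 4 else snd a)"

text \<open>Arc of circle c traversed in direction g c starting at quarter point s.\<close>
definition arc_from :: "(circ \<Rightarrow> int) \<Rightarrow> circ \<Rightarrow> nat \<Rightarrow> arc" where
  "arc_from g c s = (c, if g c = 1 then s else (s + 3) mod 4)"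

text \<open>The motion: after traversing arc a, the next arc traversed.  If the end point is a link
  position, pass to the neighbour at the opposite point and continue in its direction.\<close>
definition next_arc :: "nat \<Rightarrow> nat \<Rightarrow> (circ \<Rightarrow> int) \<Rightarrow> arc \<Rightarrow> arc" where
  "next_arc n m g a =
     (let e = end_pt g a in
      case nbr n m (fst a) e of
        Some c' \<Rightarrow> arc_from g c' ((e + 2) mod 4)
      | None \<Rightarrow> arc_from g (fst a) e)"

definition ring_of :: "nat \<Rightarrow> nat \<Rightarrow> (circ \<Rightarrow> int) \<Rightarrow> arc \<Rightarrow> arc set" where
  "ring_of n m g a = {(next_arc n m g ^^ t) a | t. True}"

definition rings :: "nat \<Rightarrow> nat \<Rightarrow> (circ \<Rightarrow> int) \<Rightarrow> arc set set" where
  "rings n m g = ring_of n m g ` arcs n m"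

definition ring_length :: "arc set \<Rightarrow> real" where
  "ring_length R = (pi / 2) * real (card R)"

definition hits_top :: "nat \<Rightarrow> nat \<Rightarrow> (circ \<Rightarrow> int) \<Rightarrow> arc set \<Rightarrow> nat" where
  "hits_top n m g R = card {a \<in> R. fst (fst a) = 1 \<and> end_pt g a = 1}"
definition hits_bottom :: "nat \<Rightarrow> nat \<Rightarrow> (circ \<Rightarrow> int) \<Rightarrow> arc set \<Rightarrow> nat" where
  "hits_bottom n m g R = card {a \<in> R. fst (fst a) = n \<and> end_pt g a = 3}"
definition hits_left :: "nat \<Rightarrow> nat \<Rightarrow> (circ \<Rightarrow> int) \<Rightarrow> arc set \<Rightarrow> nat" where
  "hits_left n m g R = card {a \<in> R. snd (fst a) = 1 \<and> end_pt g a = 2}"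
definition hits_right :: "nat \<Rightarrow> nat \<Rightarrow> (circ \<Rightarrow> int) \<Rightarrow> arc set \<Rightarrow> nat" where
  "hits_right n m g R = card {a \<in> R. snd (fst a) = m \<and> end_pt g a = 0}"

end

theory Submission
  imports Defs "HOL-Number_Theory.Cong"
begin

text \<open>Follow the horizontal and the vertical motion of the point separately. Each quarter arc
  moves it half a column sideways and half a row up or down, and since adjacent circles turn in
  opposite senses, passing a link reverses neither motion; only the walls do. So each motion is a
  reflection between two opposite walls with period \<open>4n\<close> quarter arcs, and one step advances a
  horizontal and a vertical phase by one modulo \<open>4n\<close>. The two phases together determine the
  arc, so every ring is a cycle of exactly \<open>4n\<close> quarter arcs (length \<open>2n\<pi>\<close>), the \<open>4n\<^sup>2\<close> arcs
  fall into \<open>n\<close> rings, and on each ring every phase value, in particular each value at which a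
  wall is touched, occurs exactly once.\<close>

section \<open>Orbits of a map advancing two separating phases\<close>

definition orbit :: "('a \<Rightarrow> 'a) \<Rightarrow> 'a \<Rightarrow> 'a set" where
  "orbit f a = range (\<lambda>t. (f ^^ t) a)"

lemma self_in_orbit: "a \<in> orbit f a"
  unfolding orbit_def by (metis funpow_0 rangeI)

lemma orbit_subset_of_mem:
  assumes "b \<in> orbit f a"
  shows "orbit f b \<subseteq> orbit f a"
proof
  fix x assume "x \<in> orbit f b"
  then obtain s where "x = (f ^^ s) b" by (auto simp: orbit_def)
  moreover obtain t where "b = (f ^^ t) a" using assms by (auto simp: orbit_def)
  ultimately have "x = (f ^^ (s + t)) a" by (simp add: funpow_add)
  then show "x \<in> orbit f a" by (simp add: orbit_def)
qed

lemma inj_on_add_mod: "inj_on (\<lambda>t. (x + t) mod N) {..<N}" for x N :: nat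
proof (rule inj_onI)
  fix s t assume "s \<in> {..<N}" "t \<in> {..<N}" "(x + s) mod N = (x + t) mod N"
  then show "s = t"
    using cong_add_lcancel_nat[of x s t N] cong_less_modulus_unique_nat[of s t N]
    by (simp add: cong_def)
qed

lemma bij_betw_add_mod: "bij_betw (\<lambda>t. (x + t) mod N) {..<N} {..<N}" for x N :: nat
proof -
  have "(\<lambda>t. (x + t) mod N) ` {..<N} \<subseteq> {..<N}" by auto
  then show ?thesis
    using endo_inj_surj[OF _ _ inj_on_add_mod] by (simp add: bij_betw_def inj_on_add_mod)
qed

locale phased_map =
  fixes A :: "'a set" and f :: "'a \<Rightarrow> 'a" and N :: nat and u v :: "'a \<Rightarrow> nat"
  assumes maps_to: "a \<in> A \<Longrightarrow> f a \<in> A"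
    and u_less: "a \<in> A \<Longrightarrow> u a < N" and u_step: "a \<in> A \<Longrightarrow> u (f a) = Suc (u a) mod N"
    and v_less: "a \<in> A \<Longrightarrow> v a < N" and v_step: "a \<in> A \<Longrightarrow> v (f a) = Suc (v a) mod N"
    and inj_on_phases: "inj_on (\<lambda>a. (u a, v a)) A"
begin

lemma funpow_in: "a \<in> A \<Longrightarrow> (f ^^ t) a \<in> A"
  by (induction t) (simp_all add: maps_to)

lemma orbit_subset: "a \<in> A \<Longrightarrow> orbit f a \<subseteq> A"
  by (auto simp: orbit_def funpow_in)

definition phase :: "('a \<Rightarrow> nat) \<Rightarrow> bool" where
  "phase w \<longleftrightarrow> (\<forall>b \<in> A. w b < N \<and> w (f b) = Suc (w b) mod N)"

lemma phase_u: "phase u" and phase_v: "phase v"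
  by (simp_all add: phase_def u_less u_step v_less v_step)

lemma phase_funpow:
  assumes w: "phase w" and a: "a \<in> A"
  shows "w ((f ^^ t) a) = (w a + t) mod N"
proof (induction t)
  case 0
  show ?case using w a by (simp add: phase_def)
next
  case (Suc t)
  then show ?case using w funpow_in[OF a] by (simp add: phase_def mod_Suc_eq)
qed

lemma funpow_period: "a \<in> A \<Longrightarrow> (f ^^ N) a = a"
  using inj_onD[OF inj_on_phases, of "(f ^^ N) a" a] funpow_in
    phase_funpow[OF phase_u] phase_funpow[OF phase_v] u_less v_less
  by simp

lemma funpow_mod:
  assumes a: "a \<in> A"
  shows "(f ^^ (t mod N)) a = (f ^^ t) a"
proof -
  have period_mult: "(f ^^ (N * q)) a = a" for q
    by (induction q) (simp_all add: funpow_add funpow_period[OF a])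
  have "(f ^^ t) a = (f ^^ (t mod N + N * (t div N))) a" by simp
  also have "\<dots> = (f ^^ (t mod N)) a" by (simp only: funpow_add comp_apply period_mult)
  finally show ?thesis by simp
qed

lemma orbit_eq_image:
  assumes a: "a \<in> A"
  shows "orbit f a = (\<lambda>t. (f ^^ t) a) ` {..<N}"
proof -
  have "0 < N" using u_less[OF a] by simp
  then have "(f ^^ t) a \<in> (\<lambda>t. (f ^^ t) a) ` {..<N}" for t
    by (intro image_eqI[of _ _ "t mod N"]) (simp_all add: funpow_mod[OF a])
  then show ?thesis by (auto simp: orbit_def)
qed

lemma bij_betw_phase_orbit:
  assumes w: "phase w" and a: "a \<in> A"
  shows "bij_betw w (orbit f a) {..<N}"
proof -
  have "w \<circ> (\<lambda>t. (f ^^ t) a) = (\<lambda>t. (w a + t) mod N)"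
    using phase_funpow[OF w a] by auto
  then have bij_comp: "bij_betw (w \<circ> (\<lambda>t. (f ^^ t) a)) {..<N} {..<N}"
    by (simp add: bij_betw_add_mod)
  then have "bij_betw (\<lambda>t. (f ^^ t) a) {..<N} (orbit f a)"
    using orbit_eq_image[OF a] inj_on_imageI2 unfolding bij_betw_def by blast
  then show ?thesis using bij_comp bij_betw_comp_iff by blast
qed

lemma card_orbit: "a \<in> A \<Longrightarrow> card (orbit f a) = N"
  using bij_betw_same_card[OF bij_betw_phase_orbit[OF phase_u]] by simp

lemma card_orbit_phase_level:
  assumes w: "phase w" and a: "a \<in> A" and c: "c < N"
    and P: "\<And>b. b \<in> A \<Longrightarrow> P b \<longleftrightarrow> w b = c"
  shows "card {b \<in> orbit f a. P b} = 1"
proof -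
  have bij: "bij_betw w (orbit f a) {..<N}" by (rule bij_betw_phase_orbit[OF w a])
  then obtain b where b: "b \<in> orbit f a" "w b = c"
    using c unfolding bij_betw_def by (metis imageE lessThan_iff)
  have "{b \<in> orbit f a. P b} = {b \<in> orbit f a. w b = c}"
    using P orbit_subset[OF a] by blast
  also have "\<dots> = {b}"
    using b bij by (auto simp: bij_betw_def inj_on_def)
  finally show ?thesis by simp
qed

lemma orbit_eq_of_mem:
  assumes a: "a \<in> A" and b: "b \<in> orbit f a"
  shows "orbit f b = orbit f a"
proof (rule card_subset_eq)
  show "finite (orbit f a)" using card_orbit[OF a] u_less[OF a] card.infinite by fastforce
  show "orbit f b \<subseteq> orbit f a" by (rule orbit_subset_of_mem[OF b])
  show "card (orbit f b) = card (orbit f a)"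
    using card_orbit a orbit_subset[OF a] b by auto
qed

lemma card_orbits:
  assumes "finite A"
  shows "N * card (orbit f ` A) = card A"
proof -
  have "\<Union> (orbit f ` A) = A"
    using orbit_subset self_in_orbit by (auto intro!: UN_I)
  moreover have "c1 \<inter> c2 = {}"
    if c12: "c1 \<in> orbit f ` A" "c2 \<in> orbit f ` A" and ne: "c1 \<noteq> c2" for c1 c2
  proof (rule ccontr)
    obtain a1 a2 where a: "a1 \<in> A" "a2 \<in> A" and c: "c1 = orbit f a1" "c2 = orbit f a2"
      using c12 by blast
    assume "c1 \<inter> c2 \<noteq> {}"
    then obtain b where "b \<in> orbit f a1" "b \<in> orbit f a2" using c by blast
    then have "c1 = c2" using orbit_eq_of_mem a c by metis
    then show False using ne by contradiction
  qed
  ultimately show ?thesis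
    using card_partition[of "orbit f ` A" N] assms card_orbit by fastforce
qed

end

section \<open>Rings of the grid\<close>

lemma direction_assignment_adjacent:
  "direction_assignment n m g \<Longrightarrow> adjacent n m c c' \<Longrightarrow> g c' = - g c"
  by (cases c, cases c') (simp add: direction_assignment_def)

lemma direction_assignment_cases:
  "direction_assignment n m g \<Longrightarrow> c \<in> grid n m \<Longrightarrow> g c = 1 \<or> g c = -1"
  by (simp add: direction_assignment_def)

lemma direction_assignment_neighbours:
  assumes "direction_assignment n m g" and "(i, j) \<in> grid n m"
  shows "j < m \<Longrightarrow> g (i, j + 1) = - g (i, j)"
    and "1 < j \<Longrightarrow> g (i, j - 1) = - g (i, j)"
    and "1 < i \<Longrightarrow> g (i - 1, j) = - g (i, j)"
    and "i < n \<Longrightarrow> g (i + 1, j) = - g (i, j)"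
  using assms(2) by (auto intro!: direction_assignment_adjacent[OF assms(1)]
      simp: adjacent_def grid_def of_nat_diff)

lemma nbr_adjacent: "nbr n m c p = Some c' \<Longrightarrow> adjacent n m c c'"
  by (auto simp: nbr_def adjacent_def Let_def grid_def split: if_splits)

lemma finite_arcs: "finite (arcs n m)"
  by (simp add: arcs_def grid_def)

lemma arcsE:
  assumes "a \<in> arcs n m"
  obtains i j k where "a = ((i, j), k)" and "(i, j) \<in> grid n m"
    and "k = 0 \<or> k = 1 \<or> k = 2 \<or> k = 3"
proof -
  obtain i j k where "a = ((i, j), k)" "(i, j) \<in> grid n m" "k < 4"
    using assms by (auto simp: arcs_def)
  moreover from \<open>k < 4\<close> have "k = 0 \<or> k = 1 \<or> k = 2 \<or> k = 3" by auto
  ultimately show ?thesis using that by blast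
qed

text \<open>Adjacent circles turn in opposite senses, so crossing a link continues on the quarter arc
  of the neighbour diametrically opposite to the current one.\<close>
lemma next_arc_eq:
  assumes da: "direction_assignment n m g" and a: "(c, k) \<in> arcs n m"
  shows "next_arc n m g (c, k) =
    (case nbr n m c (end_pt g (c, k)) of
       Some c' \<Rightarrow> (c', (k + 2) mod 4)
     | None \<Rightarrow> (c, if g c = 1 then (k + 1) mod 4 else (k + 3) mod 4))"
proof (cases "nbr n m c (end_pt g (c, k))")
  case None
  then show ?thesis by (simp add: next_arc_def arc_from_def end_pt_def)
next
  case (Some c')
  have "g c = 1 \<or> g c = -1" using direction_assignment_cases[OF da] a by (simp add: arcs_def)
  moreover have "g c' = - g c"
    using direction_assignment_adjacent[OF da nbr_adjacent[OF Some]] .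
  moreover have "k = 0 \<or> k = 1 \<or> k = 2 \<or> k = 3" using a by (auto simp: arcs_def)
  ultimately show ?thesis using Some
    by (auto simp: next_arc_def arc_from_def end_pt_def)
qed

lemma next_arc_in_arcs:
  assumes da: "direction_assignment n m g" and a: "a \<in> arcs n m"
  shows "next_arc n m g a \<in> arcs n m"
proof -
  obtain c k where ck: "a = (c, k)" by fastforce
  show ?thesis
    using a nbr_adjacent[of n m c] unfolding ck next_arc_eq[OF da a[unfolded ck]]
    by (auto simp: adjacent_def arcs_def split: option.split)
qed

lemma next_arc_ccw:
  assumes da: "direction_assignment n m g" and c: "(i, j) \<in> grid n m" and g: "g (i, j) = 1"
  shows "next_arc n m g ((i, j), 0) = (if 1 < i then ((i - 1, j), 2) else ((i, j), 1))"
    and "next_arc n m g ((i, j), 1) = (if 1 < j then ((i, j - 1), 3) else ((i, j), 2))"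
    and "next_arc n m g ((i, j), 2) = (if i < n then ((i + 1, j), 0) else ((i, j), 3))"
    and "next_arc n m g ((i, j), 3) = (if j < m then ((i, j + 1), 1) else ((i, j), 0))"
  using c g by (auto simp: next_arc_eq[OF da] arcs_def end_pt_def nbr_def Let_def grid_def)

lemma next_arc_cw:
  assumes da: "direction_assignment n m g" and c: "(i, j) \<in> grid n m" and g: "g (i, j) = -1"
  shows "next_arc n m g ((i, j), 0) = (if j < m then ((i, j + 1), 2) else ((i, j), 3))"
    and "next_arc n m g ((i, j), 1) = (if 1 < i then ((i - 1, j), 3) else ((i, j), 0))"
    and "next_arc n m g ((i, j), 2) = (if 1 < j then ((i, j - 1), 0) else ((i, j), 1))"
    and "next_arc n m g ((i, j), 3) = (if i < n then ((i + 1, j), 1) else ((i, j), 2))"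
  using c g by (auto simp: next_arc_eq[OF da] arcs_def end_pt_def nbr_def Let_def grid_def)

text \<open>The phase of the horizontal back-and-forth motion: column \<open>j\<close> is crossed rightwards during
  phases \<open>2j - 2, 2j - 1\<close> and leftwards during \<open>4n - 2j, 4n - 2j + 1\<close>, one phase per quarter
  arc. The vertical phase does the same for rows, downwards first.\<close>
definition horizontal_phase :: "nat \<Rightarrow> (circ \<Rightarrow> int) \<Rightarrow> arc \<Rightarrow> nat" where
  "horizontal_phase n g a =
     (let j = snd (fst a); k = snd a in
      if g (fst a) = 1
      then (if k = 0 then 4 * n - 2 * j else if k = 1 then 4 * n - 2 * j + 1
            else if k = 2 then 2 * j - 2 else 2 * j - 1)
      else (if k = 0 then 2 * j - 1 else if k = 1 then 2 * j - 2
            else if k = 2 then 4 * n - 2 * j + 1 else 4 * n - 2 * j))"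

definition vertical_phase :: "nat \<Rightarrow> (circ \<Rightarrow> int) \<Rightarrow> arc \<Rightarrow> nat" where
  "vertical_phase n g a =
     (let i = fst (fst a); k = snd a in
      if g (fst a) = 1
      then (if k = 0 then 4 * n - 2 * i + 1 else if k = 1 then 2 * i - 2
            else if k = 2 then 2 * i - 1 else 4 * n - 2 * i)
      else (if k = 0 then 2 * i - 2 else if k = 1 then 4 * n - 2 * i + 1
            else if k = 2 then 4 * n - 2 * i else 2 * i - 1))"

lemma phases_less:
  assumes "a \<in> arcs n n"
  shows "horizontal_phase n g a < 4 * n" and "vertical_phase n g a < 4 * n"
  using assms by (auto simp: horizontal_phase_def vertical_phase_def arcs_def grid_def Let_def)

lemma horizontal_phase_next_arc:
  assumes da: "direction_assignment n n g" and a: "a \<in> arcs n n"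
  shows "horizontal_phase n g (next_arc n n g a) = Suc (horizontal_phase n g a) mod (4 * n)"
proof -
  obtain i j k where aa: "a = ((i, j), k)" and c: "(i, j) \<in> grid n n"
    and k: "k = 0 \<or> k = 1 \<or> k = 2 \<or> k = 3"
    using a by (rule arcsE)
  show ?thesis
    unfolding mod_Suc mod_less[OF phases_less(1)[OF a]] aa
    using k direction_assignment_cases[OF da c] c
    by (elim disjE) (auto simp: next_arc_ccw[OF da c, simplified] next_arc_cw[OF da c, simplified]
        direction_assignment_neighbours[OF da c, simplified] horizontal_phase_def grid_def)
qed

lemma vertical_phase_next_arc:
  assumes da: "direction_assignment n n g" and a: "a \<in> arcs n n"
  shows "vertical_phase n g (next_arc n n g a) = Suc (vertical_phase n g a) mod (4 * n)"
proof -
  obtain i j k where aa: "a = ((i, j), k)" and c: "(i, j) \<in> grid n n"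
    and k: "k = 0 \<or> k = 1 \<or> k = 2 \<or> k = 3"
    using a by (rule arcsE)
  show ?thesis
    unfolding mod_Suc mod_less[OF phases_less(2)[OF a]] aa
    using k direction_assignment_cases[OF da c] c
    by (elim disjE) (auto simp: next_arc_ccw[OF da c, simplified] next_arc_cw[OF da c, simplified]
        direction_assignment_neighbours[OF da c, simplified] vertical_phase_def grid_def)
qed

lemma phase_div_2:
  fixes n x :: nat
  shows "x \<le> 2 * n \<Longrightarrow> (4 * n - 2 * x) div 2 = 2 * n - x"
    and "x \<le> 2 * n \<Longrightarrow> (4 * n - 2 * x + 1) div 2 = 2 * n - x"
    and "(2 * x - 2) div 2 = x - 1"
    and "(2 * x - 1) div 2 = x - 1"
  by presburger+

lemma row_of_vertical_phase:
  assumes da: "direction_assignment n n g" and a: "a \<in> arcs n n"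
  shows "fst (fst a) = (if vertical_phase n g a < 2 * n then vertical_phase n g a div 2 + 1
                        else 2 * n - vertical_phase n g a div 2)"
proof -
  obtain i j k where aa: "a = ((i, j), k)" and c: "(i, j) \<in> grid n n"
    and k: "k = 0 \<or> k = 1 \<or> k = 2 \<or> k = 3"
    using a by (rule arcsE)
  show ?thesis
    using k direction_assignment_cases[OF da c] c unfolding aa
    by (elim disjE) (auto simp: vertical_phase_def grid_def phase_div_2)
qed

lemma column_of_horizontal_phase:
  assumes da: "direction_assignment n n g" and a: "a \<in> arcs n n"
  shows "snd (fst a) = (if horizontal_phase n g a < 2 * n then horizontal_phase n g a div 2 + 1
                        else 2 * n - horizontal_phase n g a div 2)"
proof -
  obtain i j k where aa: "a = ((i, j), k)" and c: "(i, j) \<in> grid n n"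
    and k: "k = 0 \<or> k = 1 \<or> k = 2 \<or> k = 3"
    using a by (rule arcsE)
  show ?thesis
    using k direction_assignment_cases[OF da c] c unfolding aa
    by (elim disjE) (auto simp: horizontal_phase_def grid_def phase_div_2)
qed

lemma inj_on_phases:
  assumes da: "direction_assignment n n g"
  shows "inj_on (\<lambda>a. (horizontal_phase n g a, vertical_phase n g a)) (arcs n n)"
proof (rule inj_onI)
  fix a b assume a: "a \<in> arcs n n" and b: "b \<in> arcs n n"
    and eq: "(horizontal_phase n g a, vertical_phase n g a) = (horizontal_phase n g b, vertical_phase n g b)"
  then have same_circle: "fst a = fst b"
    using row_of_vertical_phase[OF da] column_of_horizontal_phase[OF da] by (simp add: prod_eq_iff)
  obtain i j k where aa: "a = ((i, j), k)" and c: "(i, j) \<in> grid n n"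
    and k: "k = 0 \<or> k = 1 \<or> k = 2 \<or> k = 3"
    using a by (rule arcsE)
  obtain k' where bb: "b = ((i, j), k')" and k': "k' = 0 \<or> k' = 1 \<or> k' = 2 \<or> k' = 3"
    using b same_circle aa by (auto elim: arcsE)
  show "a = b"
    using k k' direction_assignment_cases[OF da c] c eq unfolding aa bb
    by (elim disjE) (auto simp: horizontal_phase_def grid_def)
qed

lemma phased_map_grid:
  assumes da: "direction_assignment n n g"
  shows "phased_map (arcs n n) (next_arc n n g) (4 * n) (horizontal_phase n g) (vertical_phase n g)"
  by unfold_locales (simp_all add: next_arc_in_arcs[OF da] phases_less
      horizontal_phase_next_arc[OF da] vertical_phase_next_arc[OF da] inj_on_phases[OF da])

lemma rings_eq_orbits: "rings n m g = orbit (next_arc n m g) ` arcs n m"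
  by (simp add: rings_def ring_of_def orbit_def full_SetCompr_eq)

lemma card_rings:
  assumes da: "direction_assignment n n g"
  shows "card (rings n n g) = n"
proof -
  interpret phased_map "arcs n n" "next_arc n n g" "4 * n" "horizontal_phase n g" "vertical_phase n g"
    by (rule phased_map_grid[OF da])
  have "4 * n * card (rings n n g) = 4 * n * n"
    unfolding rings_eq_orbits card_orbits[OF finite_arcs]
    by (simp add: arcs_def grid_def card_cartesian_product)
  then show ?thesis
    by (cases "n = 0") (simp_all add: rings_eq_orbits arcs_def grid_def)
qed

lemma ring_length_rings:
  assumes da: "direction_assignment n n g" and R: "R \<in> rings n n g"
  shows "ring_length R = 2 * real n * pi"
proof -
  interpret phased_map "arcs n n" "next_arc n n g" "4 * n" "horizontal_phase n g" "vertical_phase n g"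
    by (rule phased_map_grid[OF da])
  show ?thesis
    using R card_orbit by (auto simp: rings_eq_orbits ring_length_def)
qed

lemma wall_hit_iff_phase:
  assumes da: "direction_assignment n n g" and a: "a \<in> arcs n n"
  shows "fst (fst a) = 1 \<and> end_pt g a = 1 \<longleftrightarrow> vertical_phase n g a = 4 * n - 1"
    and "fst (fst a) = n \<and> end_pt g a = 3 \<longleftrightarrow> vertical_phase n g a = 2 * n - 1"
    and "snd (fst a) = 1 \<and> end_pt g a = 2 \<longleftrightarrow> horizontal_phase n g a = 4 * n - 1"
    and "snd (fst a) = n \<and> end_pt g a = 0 \<longleftrightarrow> horizontal_phase n g a = 2 * n - 1"
proof -
  obtain i j k where aa: "a = ((i, j), k)" and c: "(i, j) \<in> grid n n"
    and k: "k = 0 \<or> k = 1 \<or> k = 2 \<or> k = 3"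
    using a by (rule arcsE)
  note facts = k direction_assignment_cases[OF da c] c
  show "fst (fst a) = 1 \<and> end_pt g a = 1 \<longleftrightarrow> vertical_phase n g a = 4 * n - 1"
    using facts unfolding aa by (elim disjE) (auto simp: vertical_phase_def end_pt_def grid_def)
  show "fst (fst a) = n \<and> end_pt g a = 3 \<longleftrightarrow> vertical_phase n g a = 2 * n - 1"
    using facts unfolding aa by (elim disjE) (auto simp: vertical_phase_def end_pt_def grid_def)
  show "snd (fst a) = 1 \<and> end_pt g a = 2 \<longleftrightarrow> horizontal_phase n g a = 4 * n - 1"
    using facts unfolding aa by (elim disjE) (auto simp: horizontal_phase_def end_pt_def grid_def)
  show "snd (fst a) = n \<and> end_pt g a = 0 \<longleftrightarrow> horizontal_phase n g a = 2 * n - 1"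
    using facts unfolding aa by (elim disjE) (auto simp: horizontal_phase_def end_pt_def grid_def)
qed

lemma wall_hits_rings:
  assumes da: "direction_assignment n n g" and R: "R \<in> rings n n g"
  shows "hits_top n n g R = 1" and "hits_bottom n n g R = 1"
    and "hits_left n n g R = 1" and "hits_right n n g R = 1"
proof -
  interpret phased_map "arcs n n" "next_arc n n g" "4 * n" "horizontal_phase n g" "vertical_phase n g"
    by (rule phased_map_grid[OF da])
  obtain a where a: "a \<in> arcs n n" and R_eq: "R = orbit (next_arc n n g) a"
    using R by (auto simp: rings_eq_orbits)
  then have wall_phases: "4 * n - 1 < 4 * n" "2 * n - 1 < 4 * n"
    by (auto simp: arcs_def grid_def)
  note level = card_orbit_phase_level[OF _ a]
  show "hits_top n n g R = 1" unfolding hits_top_def R_eq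
    by (rule level[OF phase_v wall_phases(1) wall_hit_iff_phase(1)[OF da]])
  show "hits_bottom n n g R = 1" unfolding hits_bottom_def R_eq
    by (rule level[OF phase_v wall_phases(2) wall_hit_iff_phase(2)[OF da]])
  show "hits_left n n g R = 1" unfolding hits_left_def R_eq
    by (rule level[OF phase_u wall_phases(1) wall_hit_iff_phase(3)[OF da]])
  show "hits_right n n g R = 1" unfolding hits_right_def R_eq
    by (rule level[OF phase_u wall_phases(2) wall_hit_iff_phase(4)[OF da]])
qed

theorem lemma13:
  fixes n :: nat and g :: "circ \<Rightarrow> int"
  assumes "n \<ge> 1" and "direction_assignment n n g"
  shows "card (rings n n g) = n \<and>
         (\<forall>R \<in> rings n n g. ring_length R = 2 * real n * pi \<and>
            hits_top n n g R = 1 \<and> hits_bottom n n g R = 1 \<and>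
            hits_left n n g R = 1 \<and> hits_right n n g R = 1)"
  using assms(2) by (simp add: card_rings ring_length_rings wall_hits_rings)

end
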